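(* Let $n\ge 1$ and let $\mathcal F \subseteq 2^{[n]}$ be a simply rooted family of sets such that $\emptyset \in \mathcal F$. Then the cubical set $X(\mathcal F)\subseteq \mathbb R^n$ is acyclic.
   Context: $[n]=\{1,\dots,n\}$ and $2^{[n]}$ is its power set. For $A,B\in 2^{[n]}$, $[A,B]=\{C\in 2^{[n]}: A\subseteq C\subseteq B\}$, and $[i,B]$ means $[\{i\},B]$. A family $\mathcal F\subseteq 2^{[n]}$ is simply rooted if for every non-empty $A\in\mathcal F$ there is $i\in A$ with $[i,A]\subseteq \mathcal F$. The set of cubes of $\mathcal F$ is $\mathcal C(\mathcal F)=\{[A,B]: A\subseteq B,\ [A,B]\subseteq \mathcal F\}$. For $A\subseteq B$, the geometric realization $|[A,B]|$ is $I_1\times\dots\times I_n\subseteq\mathbb R^n$ where $I_i=\{1\}$ if $i\in A$, $I_i=[0,1]$ if $i\in B\setminus A$, and $I_i=\{0\}$ if $i\notin B$. The geometric realization of $\mathcal F$ is the cubical set $X(\mathcal F)=\bigcup_{[A,B]\in\mathcal C(\mathcal F)}|[A,B]|$. A cubical set (finite union of elementary cubes, i.e. products of intervals $[a,b]$ with $a,b\in\mathbb Z$, $b-a\in\{0,1\}$) $X$ is acyclic if it is non-empty and connected and its cubical homology groups $H_i(X)$ are trivial for all $i\ge 1$. *)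

theory Defs
  imports "HOL-Analysis.Analysis"
begin

(* Points of R^n are functions nat => real, coordinates indexed by [n] = {1..n},
   and all coordinates outside {1..n} equal to 0. *)

definition ival :: "nat set \<Rightarrow> nat set \<Rightarrow> nat set set" where
  "ival A B = {C. A \<subseteq> C \<and> C \<subseteq> B}"

definition simply_rooted :: "nat set set \<Rightarrow> bool" where
  "simply_rooted F \<longleftrightarrow> (\<forall>A\<in>F. A \<noteq> {} \<longrightarrow> (\<exists>i\<in>A. ival {i} A \<subseteq> F))"

definition cubes_of :: "nat set set \<Rightarrow> (nat set \<times> nat set) set" where
  "cubes_of F = {(A, B). A \<subseteq> B \<and> ival A B \<subseteq> F}"

definition geom_real :: "nat set \<Rightarrow> nat set \<Rightarrow> (nat \<Rightarrow> real) set" where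
  "geom_real A B = {x. \<forall>i. (i \<in> A \<longrightarrow> x i = 1)
                          \<and> (i \<in> B - A \<longrightarrow> 0 \<le> x i \<and> x i \<le> 1)
                          \<and> (i \<notin> B \<longrightarrow> x i = 0)}"

definition XF :: "nat set set \<Rightarrow> (nat \<Rightarrow> real) set" where
  "XF F = (\<Union>(A, B)\<in>cubes_of F. geom_real A B)"

(* An elementary cube: coordinate i carries (a, d) meaning interval [a, a+1] if d,
   degenerate [a,a] otherwise. *)
type_synonym ecube = "nat \<Rightarrow> int \<times> bool"

definition elem_cube :: "nat \<Rightarrow> ecube \<Rightarrow> bool" where
  "elem_cube n Q \<longleftrightarrow> (\<forall>i. i \<notin> {1..n} \<longrightarrow> Q i = (0, False))"

definition cube_set :: "ecube \<Rightarrow> (nat \<Rightarrow> real) set" where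
  "cube_set Q = {x. \<forall>i. of_int (fst (Q i)) \<le> x i \<and>
                        x i \<le> of_int (fst (Q i)) + (if snd (Q i) then 1 else 0)}"

definition cdim :: "ecube \<Rightarrow> nat" where
  "cdim Q = card {i. snd (Q i)}"

definition face_lo :: "ecube \<Rightarrow> nat \<Rightarrow> ecube" where
  "face_lo Q j = Q(j := (fst (Q j), False))"

definition face_hi :: "ecube \<Rightarrow> nat \<Rightarrow> ecube" where
  "face_hi Q j = Q(j := (fst (Q j) + 1, False))"

definition bd_cube :: "ecube \<Rightarrow> ecube \<Rightarrow> int" where
  "bd_cube Q = (\<lambda>P. \<Sum>j\<in>{j. snd (Q j)}.
      (-1) ^ card {i. i < j \<and> snd (Q i)} *
      ((if P = face_hi Q j then 1 else 0) - (if P = face_lo Q j then 1 else 0)))"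

definition bd :: "(ecube \<Rightarrow> int) \<Rightarrow> ecube \<Rightarrow> int" where
  "bd c = (\<lambda>P. \<Sum>Q\<in>{Q. c Q \<noteq> 0}. c Q * bd_cube Q P)"

definition chains :: "nat \<Rightarrow> (nat \<Rightarrow> real) set \<Rightarrow> nat \<Rightarrow> (ecube \<Rightarrow> int) set" where
  "chains n X k = {c. finite {Q. c Q \<noteq> 0} \<and>
     (\<forall>Q. c Q \<noteq> 0 \<longrightarrow> elem_cube n Q \<and> cdim Q = k \<and> cube_set Q \<subseteq> X)}"

definition homology_trivial :: "nat \<Rightarrow> (nat \<Rightarrow> real) set \<Rightarrow> nat \<Rightarrow> bool" where
  "homology_trivial n X k \<longleftrightarrow>
     (\<forall>c\<in>chains n X k. bd c = (\<lambda>_. 0) \<longrightarrow> (\<exists>d\<in>chains n X (Suc k). bd d = c))"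

definition acyclic_cubical :: "nat \<Rightarrow> (nat \<Rightarrow> real) set \<Rightarrow> bool" where
  "acyclic_cubical n X \<longleftrightarrow> X \<noteq> {} \<and> connected X \<and> (\<forall>k\<ge>1. homology_trivial n X k)"

end

theory Submission
  imports Defs
begin

(* The cubes of X(F) are the cubes |[A,B]| with [A,B] inside F.  On them we build an acyclic
   matching whose only unmatched cube is the vertex |[{},{}]|; collapsing the matched pairs
   one at a time, from the top level down, does not change homology, so X(F) is acyclic.

   The cube [A,B], B nonempty, is matched with [A', B], where A' arises from A by toggling one
   element x of B.  If toggling a root r of B keeps the interval inside F, then x = r.
   Otherwise we use that, walking down from B along roots, the sets A' \<subseteq> B with [A',B] not
   inside F are exactly the subsets of a set C with C \<notin> F; as {} \<in> F, C is nonempty, and x is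
   a fixed element of C.  Levels grow with |B| and then with |B - insert x A|.

   X(F) is connected because the vertex A of a cube is joined to the origin through the cubes
   [r, A] and [{}, {r}], r a root of A. *)

section \<open>Cubical chains\<close>

definition chain_supp :: "(ecube \<Rightarrow> int) \<Rightarrow> ecube set" where
  "chain_supp c = {Q. c Q \<noteq> 0}"

lemma bd_eq_sum:
  assumes "finite S" "chain_supp c \<subseteq> S"
  shows "bd c P = (\<Sum>Q\<in>S. c Q * bd_cube Q P)"
  unfolding bd_def
  by (rule sum.mono_neutral_left) (use assms in \<open>auto simp: chain_supp_def\<close>)

lemma bd_add_scaled:
  assumes "finite (chain_supp c)" "finite (chain_supp d)"
  shows "bd (\<lambda>Q. c Q + a * d Q) = (\<lambda>P. bd c P + a * bd d P)"
proof
  fix P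
  let ?S = "chain_supp c \<union> chain_supp d"
  have "chain_supp (\<lambda>Q. c Q + a * d Q) \<subseteq> ?S" by (auto simp: chain_supp_def)
  then show "bd (\<lambda>Q. c Q + a * d Q) P = bd c P + a * bd d P"
    using assms by (simp add: bd_eq_sum[of ?S] sum.distrib sum_distrib_left algebra_simps)
qed

lemma bd_sum:
  assumes "finite J" "\<And>j. j \<in> J \<Longrightarrow> finite (chain_supp (f j))"
  shows "bd (\<lambda>Q. \<Sum>j\<in>J. f j Q) P = (\<Sum>j\<in>J. bd (f j) P)"
proof -
  let ?S = "\<Union>j\<in>J. chain_supp (f j)"
  have "chain_supp (\<lambda>Q. \<Sum>j\<in>J. f j Q) \<subseteq> ?S"
    by (auto simp: chain_supp_def intro: ccontr)
  then have "bd (\<lambda>Q. \<Sum>j\<in>J. f j Q) P = (\<Sum>Q\<in>?S. \<Sum>j\<in>J. f j Q * bd_cube Q P)"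
    using assms by (simp add: bd_eq_sum[of ?S] sum_distrib_right)
  also have "\<dots> = (\<Sum>j\<in>J. \<Sum>Q\<in>?S. f j Q * bd_cube Q P)"
    by (rule sum.swap)
  also have "\<dots> = (\<Sum>j\<in>J. bd (f j) P)"
    using assms by (intro sum.cong refl bd_eq_sum[symmetric]) auto
  finally show ?thesis .
qed

lemma bd_single: "bd (\<lambda>Q. if Q = R then a else 0) = (\<lambda>P. a * bd_cube R P)"
  by (rule ext, subst bd_eq_sum[of "{R}"]) (auto simp: chain_supp_def)

lemma bd_dipole:
  "bd (\<lambda>R. a * ((if R = S then 1 else 0) - (if R = T then 1 else 0))) P
     = a * (bd_cube S P - bd_cube T P)"
  by (cases "S = T"; subst bd_eq_sum[of "{S, T}"]) (auto simp: chain_supp_def algebra_simps)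

lemma bd_cube_nonzero_imp_face:
  assumes "bd_cube Q P \<noteq> 0"
  obtains j where "snd (Q j)" "P = face_hi Q j \<or> P = face_lo Q j"
proof -
  have "\<exists>j. snd (Q j) \<and> (P = face_hi Q j \<or> P = face_lo Q j)"
  proof (rule ccontr)
    assume "\<not> ?thesis"
    then have "bd_cube Q P = 0" unfolding bd_cube_def by (intro sum.neutral) auto
    with assms show False by simp
  qed
  then show ?thesis using that by blast
qed

lemma finite_chain_supp_bd_cube:
  assumes "finite {i. snd (Q i)}"
  shows "finite (chain_supp (bd_cube Q))"
proof (rule finite_subset)
  show "chain_supp (bd_cube Q) \<subseteq> (\<lambda>j. face_hi Q j) ` {j. snd (Q j)} \<union> (\<lambda>j. face_lo Q j) ` {j. snd (Q j)}"
    unfolding chain_supp_def by (blast elim: bd_cube_nonzero_imp_face)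
qed (use assms in simp)

lemma face_hi_neq:
  assumes "snd (Q j)"
  shows "face_hi Q j \<noteq> face_lo Q l" and "l \<noteq> j \<Longrightarrow> face_hi Q j \<noteq> face_hi Q l"
proof -
  show "face_hi Q j \<noteq> face_lo Q l"
  proof
    assume "face_hi Q j = face_lo Q l"
    then have "face_hi Q j j = face_lo Q l j" by simp
    with assms show False by (cases "j = l") (auto simp: face_hi_def face_lo_def prod_eq_iff)
  qed
  show "face_hi Q j \<noteq> face_hi Q l" if "l \<noteq> j"
  proof
    assume "face_hi Q j = face_hi Q l"
    then have "face_hi Q j j = face_hi Q l j" by simp
    with assms that show False by (simp add: face_hi_def prod_eq_iff)
  qed
qed

lemma face_commute:
  assumes "j \<noteq> l"
  shows "face_hi (face_hi Q j) l = face_hi (face_hi Q l) j"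
    and "face_lo (face_hi Q j) l = face_hi (face_lo Q l) j"
    and "face_lo (face_lo Q j) l = face_lo (face_lo Q l) j"
  using assms by (auto simp: face_hi_def face_lo_def fun_upd_twist)

lemma nondegenerate_face [simp]:
  "{i. snd (face_hi Q j i)} = {i. snd (Q i)} - {j}"
  "{i. snd (face_lo Q j i)} = {i. snd (Q i)} - {j}"
  by (auto simp: face_hi_def face_lo_def)

lemma cdim_bd_cube_nonzero:
  assumes "finite {i. snd (Q i)}" "bd_cube Q P \<noteq> 0"
  shows "cdim Q = Suc (cdim P)"
proof -
  obtain j where "snd (Q j)" "P = face_hi Q j \<or> P = face_lo Q j"
    using assms(2) by (rule bd_cube_nonzero_imp_face)
  then have "{i. snd (P i)} = {i. snd (Q i)} - {j}" "j \<in> {i. snd (Q i)}"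
    by (auto simp: face_hi_def face_lo_def split: if_splits)
  then show ?thesis
    unfolding cdim_def using assms(1) by (metis card_Suc_Diff1)
qed

definition face_sign :: "ecube \<Rightarrow> nat \<Rightarrow> int" where
  "face_sign Q j = (-1) ^ card {i. i < j \<and> snd (Q i)}"

lemma bd_cube_eq:
  "bd_cube Q = (\<lambda>P. \<Sum>j\<in>{j. snd (Q j)}.
     face_sign Q j * ((if P = face_hi Q j then 1 else 0) - (if P = face_lo Q j then 1 else 0)))"
  unfolding bd_cube_def face_sign_def ..

lemma abs_bd_cube_face_hi:
  assumes "finite {i. snd (Q i)}" "snd (Q j)"
  shows "\<bar>bd_cube Q (face_hi Q j)\<bar> = 1"
proof -
  have "bd_cube Q (face_hi Q j) = (\<Sum>l\<in>{i. snd (Q i)}. if l = j then face_sign Q j else 0)"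
    unfolding bd_cube_eq by (rule sum.cong) (use assms(2) face_hi_neq in auto)
  also have "\<dots> = face_sign Q j" using assms by simp
  finally show ?thesis by (simp add: face_sign_def)
qed

lemma face_sign_face_lo: "face_sign (face_lo Q j) l = face_sign (face_hi Q j) l"
proof -
  have "{i. i < l \<and> snd (face_lo Q j i)} = {i. i < l \<and> snd (face_hi Q j i)}"
    by (auto simp: face_hi_def face_lo_def)
  then show ?thesis unfolding face_sign_def by simp
qed

lemma face_sign_antisym:
  assumes "snd (Q j)" "snd (Q l)" "j \<noteq> l"
  shows "face_sign Q l * face_sign (face_hi Q l) j = - (face_sign Q j * face_sign (face_hi Q j) l)"
proof -
  have shift: "face_sign (face_hi Q j) l = - face_sign Q l \<and> face_sign (face_hi Q l) j = face_sign Q j"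
    if "snd (Q j)" "j < l" for j l
  proof -
    have "{i. i < l \<and> snd (Q i)} = insert j {i. i < l \<and> snd (face_hi Q j i)}"
      "{i. i < j \<and> snd (face_hi Q l i)} = {i. i < j \<and> snd (Q i)}"
      using that by (auto simp: face_hi_def)
    then show ?thesis unfolding face_sign_def by (simp add: face_hi_def)
  qed
  show ?thesis
    using assms shift[of j l] shift[of l j] by (cases "j < l") auto
qed

lemma antisym_double_sum_eq_0:
  fixes f :: "'a \<Rightarrow> 'a \<Rightarrow> 'b::linordered_ab_group_add"
  assumes "finite J" "\<And>j l. j \<in> J \<Longrightarrow> l \<in> J \<Longrightarrow> j \<noteq> l \<Longrightarrow> f l j = - f j l"
  shows "(\<Sum>j\<in>J. \<Sum>l\<in>J - {j}. f j l) = 0"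
proof -
  have "(\<Sum>j\<in>J. \<Sum>l\<in>J - {j}. f j l) = (\<Sum>l\<in>J. \<Sum>j\<in>J - {l}. f j l)"
    using sum.swap_restrict[OF assms(1) assms(1), of f "\<lambda>j l. j \<noteq> l"]
    by (simp add: set_diff_eq eq_commute)
  also have "\<dots> = (\<Sum>l\<in>J. \<Sum>j\<in>J - {l}. - f l j)"
    using assms(2) by (intro sum.cong refl) (metis DiffE insertI1 minus_minus)
  also have "\<dots> = - (\<Sum>j\<in>J. \<Sum>l\<in>J - {j}. f j l)"
    by (simp add: sum_negf)
  finally show ?thesis by simp
qed

lemma bd_bd_cube:
  assumes "finite {i. snd (Q i)}"
  shows "bd (bd_cube Q) = (\<lambda>_. 0)"
proof
  fix P
  define J where "J = {i. snd (Q i)}"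
  define g where "g j l =
      (if P = face_hi (face_hi Q j) l then 1 else 0) - (if P = face_lo (face_hi Q j) l then 1 else 0)
    - (if P = face_hi (face_lo Q j) l then 1 else 0) + (if P = face_lo (face_lo Q j) l then 1 else (0::int))"
    for j l
  have "bd (bd_cube Q) P = (\<Sum>j\<in>J. bd (\<lambda>R. face_sign Q j *
      ((if R = face_hi Q j then 1 else 0) - (if R = face_lo Q j then 1 else 0))) P)"
    unfolding bd_cube_eq[of Q] J_def[symmetric] using assms unfolding J_def
    by (intro bd_sum) (auto simp: chain_supp_def intro: finite_subset[of _ "{face_hi Q _, face_lo Q _}"])
  also have "\<dots> = (\<Sum>j\<in>J. face_sign Q j * (bd_cube (face_hi Q j) P - bd_cube (face_lo Q j) P))"
    by (simp add: bd_dipole)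
  also have "\<dots> = (\<Sum>j\<in>J. \<Sum>l\<in>J - {j}. face_sign Q j * face_sign (face_hi Q j) l * g j l)"
  proof (rule sum.cong[OF refl])
    fix j
    have "bd_cube (face_hi Q j) P - bd_cube (face_lo Q j) P = (\<Sum>l\<in>J - {j}. face_sign (face_hi Q j) l * g j l)"
      unfolding bd_cube_eq nondegenerate_face face_sign_face_lo J_def[symmetric]
      by (simp add: sum_subtractf[symmetric] g_def algebra_simps)
    then show "face_sign Q j * (bd_cube (face_hi Q j) P - bd_cube (face_lo Q j) P) =
        (\<Sum>l\<in>J - {j}. face_sign Q j * face_sign (face_hi Q j) l * g j l)"
      by (simp add: sum_distrib_left mult.assoc)
  qed
  also have "\<dots> = 0"
  proof (rule antisym_double_sum_eq_0)
    fix j l assume "j \<in> J" "l \<in> J" "j \<noteq> l"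
    moreover have "g l j = g j l"
      unfolding g_def using face_commute[OF \<open>j \<noteq> l\<close>] face_commute[of l j Q] \<open>j \<noteq> l\<close> by auto
    ultimately show "face_sign Q l * face_sign (face_hi Q l) j * g l j =
        - (face_sign Q j * face_sign (face_hi Q j) l * g j l)"
      using face_sign_antisym[of Q j l] unfolding J_def by simp
  qed (use assms J_def in simp)
  finally show "bd (bd_cube Q) P = 0" .
qed

section \<open>Collapses and acyclic matchings\<close>

definition chains_in :: "ecube set \<Rightarrow> nat \<Rightarrow> (ecube \<Rightarrow> int) set" where
  "chains_in K k = {c. finite (chain_supp c) \<and> (\<forall>Q. c Q \<noteq> 0 \<longrightarrow> Q \<in> K \<and> cdim Q = k)}"

definition acyclic_in :: "ecube set \<Rightarrow> bool" where
  "acyclic_in K \<longleftrightarrow>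
     (\<forall>k\<ge>1. \<forall>c\<in>chains_in K k. bd c = (\<lambda>_. 0) \<longrightarrow> (\<exists>d\<in>chains_in K (Suc k). bd d = c))"

definition face_closed :: "ecube set \<Rightarrow> bool" where
  "face_closed K \<longleftrightarrow> (\<forall>Q\<in>K. \<forall>P. bd_cube Q P \<noteq> 0 \<longrightarrow> P \<in> K)"

lemma chains_in_mono: "K \<subseteq> L \<Longrightarrow> chains_in K k \<subseteq> chains_in L k"
  by (auto simp: chains_in_def)

lemma chains_in_Diff:
  "c \<in> chains_in K k \<Longrightarrow> (\<And>Q. Q \<in> S \<Longrightarrow> c Q = 0) \<Longrightarrow> c \<in> chains_in (K - S) k"
  by (auto simp: chains_in_def)

lemma chains_in_add_scaled:
  assumes "c \<in> chains_in K k" "d \<in> chains_in K k"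
  shows "(\<lambda>Q. c Q + a * d Q) \<in> chains_in K k"
proof -
  have supp: "chain_supp (\<lambda>Q. c Q + a * d Q) \<subseteq> chain_supp c \<union> chain_supp d"
    by (auto simp: chain_supp_def)
  show ?thesis
    unfolding chains_in_def
  proof (rule CollectI, rule conjI)
    show "finite (chain_supp (\<lambda>Q. c Q + a * d Q))"
      by (rule finite_subset[OF supp]) (use assms in \<open>simp add: chains_in_def\<close>)
    show "\<forall>Q. c Q + a * d Q \<noteq> 0 \<longrightarrow> Q \<in> K \<and> cdim Q = k"
      using supp assms unfolding chains_in_def chain_supp_def by blast
  qed
qed

lemma single_chains_in: "t \<in> K \<Longrightarrow> (\<lambda>Q. if Q = t then a else 0) \<in> chains_in K (cdim t)"
  by (simp add: chains_in_def chain_supp_def)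

lemma bd_cube_chains_in:
  assumes "face_closed K" "t \<in> K" "finite {i. snd (t i)}" "cdim t = Suc k"
  shows "bd_cube t \<in> chains_in K k"
  using assms finite_chain_supp_bd_cube[OF assms(3)] cdim_bd_cube_nonzero[OF assms(3)]
  unfolding chains_in_def face_closed_def by auto

lemma cycle_vanishes_at_free_coface:
  assumes "c \<in> chains_in K k" "bd c = (\<lambda>_. 0)" "bd_cube t s \<noteq> 0"
    and free: "\<And>R. R \<in> K \<Longrightarrow> bd_cube R s \<noteq> 0 \<Longrightarrow> R = t"
  shows "c t = 0"
proof -
  have fin: "finite (chain_supp c)" and supp: "\<And>Q. c Q \<noteq> 0 \<Longrightarrow> Q \<in> K"
    using assms(1) by (auto simp: chains_in_def)
  have "0 = bd c s" using assms(2) by simp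
  also have "\<dots> = (\<Sum>Q\<in>insert t (chain_supp c). c Q * bd_cube Q s)"
    by (rule bd_eq_sum) (use fin in auto)
  also have "\<dots> = (\<Sum>Q\<in>{t}. c Q * bd_cube Q s)"
    by (rule sum.mono_neutral_right) (use fin free supp in \<open>auto simp: chain_supp_def\<close>)
  finally show ?thesis using assms(3) by simp
qed

(* A cycle vanishes on t; subtracting a multiple of bd t clears it on s as well, and what is
   left bounds in K - {s, t}. *)
lemma acyclic_in_collapse:
  assumes closed: "face_closed K" and t: "t \<in> K" "finite {i. snd (t i)}"
    and unit: "\<bar>bd_cube t s\<bar> = 1"
    and free: "\<And>R. R \<in> K \<Longrightarrow> bd_cube R s \<noteq> 0 \<Longrightarrow> R = t"
    and acyclic: "acyclic_in (K - {s, t})"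
  shows "acyclic_in K"
  unfolding acyclic_in_def
proof (intro allI impI ballI)
  fix k c assume "k \<ge> 1" and c: "c \<in> chains_in K k" and cycle: "bd c = (\<lambda>_. 0)"
  have bounds: "\<exists>d\<in>chains_in K (Suc k). bd d = c'"
    if "c' \<in> chains_in (K - {s, t}) k" "bd c' = (\<lambda>_. 0)" for c'
    using acyclic \<open>k \<ge> 1\<close> that chains_in_mono[of "K - {s, t}" K] unfolding acyclic_in_def by blast
  have ct: "c t = 0"
    by (rule cycle_vanishes_at_free_coface[OF c cycle]) (use unit free in auto)
  show "\<exists>d\<in>chains_in K (Suc k). bd d = c"
  proof (cases "c s = 0")
    case True
    then show ?thesis using c ct by (intro bounds chains_in_Diff cycle) auto
  next
    case False
    then have dim_t: "cdim t = Suc k"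
      using c cdim_bd_cube_nonzero[OF t(2)] unit by (auto simp: chains_in_def)
    define a where "a = c s * bd_cube t s"
    define c' where "c' Q = c Q + (- a) * bd_cube t Q" for Q
    have fin: "finite (chain_supp c)" "finite (chain_supp (bd_cube t))"
      using c finite_chain_supp_bd_cube[OF t(2)] by (auto simp: chains_in_def)
    have "bd_cube t t = 0" using cdim_bd_cube_nonzero[OF t(2), of t] by auto
    then have "c' s = 0" "c' t = 0"
      using unit ct abs_mult_self_eq[of "bd_cube t s"] by (simp_all add: c'_def a_def algebra_simps)
    moreover have "c' \<in> chains_in K k"
      unfolding c'_def using c bd_cube_chains_in[OF closed t dim_t] by (rule chains_in_add_scaled)
    ultimately have "c' \<in> chains_in (K - {s, t}) k" by (intro chains_in_Diff) auto
    moreover have "bd c' = (\<lambda>_. 0)"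
      unfolding c'_def[abs_def] bd_add_scaled[OF fin] bd_bd_cube[OF t(2)] cycle by simp
    ultimately obtain d' where d': "d' \<in> chains_in K (Suc k)" "bd d' = c'"
      using bounds by blast
    define d where "d Q = d' Q + a * (if Q = t then 1 else 0)" for Q
    have "d \<in> chains_in K (Suc k)"
      unfolding d_def using d'(1) single_chains_in[OF t(1)] dim_t by (intro chains_in_add_scaled) auto
    moreover have "bd d = c"
    proof -
      have "finite (chain_supp d')" "finite (chain_supp (\<lambda>Q. if Q = t then 1 else 0))"
        using d'(1) by (auto simp: chains_in_def chain_supp_def)
      then have "bd d = (\<lambda>P. bd d' P + a * bd (\<lambda>Q. if Q = t then 1 else 0) P)"
        unfolding d_def[abs_def] by (rule bd_add_scaled)
      then show ?thesis by (simp add: d'(2) bd_single c'_def)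
    qed
    ultimately show ?thesis by blast
  qed
qed

lemma acyclic_in_vertex:
  assumes "\<And>i. \<not> snd (v i)"
  shows "acyclic_in {v}"
proof -
  have "cdim v = 0" using assms by (simp add: cdim_def)
  then have "c = (\<lambda>_. 0)" if "c \<in> chains_in {v} k" "k \<ge> 1" for c k
    using that by (fastforce simp: chains_in_def)
  moreover have "(\<lambda>_. 0) \<in> chains_in {v} k" for k
    by (simp add: chains_in_def chain_supp_def)
  ultimately show ?thesis
    unfolding acyclic_in_def by (auto simp: bd_def)
qed

locale acyclic_matching =
  fixes K :: "ecube set" and v :: ecube
    and mate :: "ecube \<Rightarrow> ecube" and level :: "ecube \<Rightarrow> 'a::linorder"
  assumes finite: "finite K" and closed: "face_closed K"
    and finite_dims: "\<And>Q. Q \<in> K \<Longrightarrow> finite {i. snd (Q i)}"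
    and vertex: "v \<in> K" "\<And>i. \<not> snd (v i)"
    and mate: "\<And>Q. Q \<in> K - {v} \<Longrightarrow> mate Q \<in> K - {v} \<and> mate (mate Q) = Q \<and>
        level (mate Q) = level Q \<and> (\<bar>bd_cube (mate Q) Q\<bar> = 1 \<or> \<bar>bd_cube Q (mate Q)\<bar> = 1)"
    and gradient: "\<And>Q R. Q \<in> K - {v} \<Longrightarrow> R \<in> K \<Longrightarrow> bd_cube R Q \<noteq> 0 \<Longrightarrow> R \<noteq> mate Q \<Longrightarrow>
        level Q < level R"
begin

lemma top_cell_cofaces:
  assumes "L \<subseteq> K" "P \<in> L - {v}" "\<And>R. R \<in> L - {v} \<Longrightarrow> level R \<le> level P"
    and "R \<in> L" "bd_cube R P \<noteq> 0"
  shows "R = mate P"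
proof (rule ccontr)
  assume "R \<noteq> mate P"
  then have "level P < level R" using gradient[of P R] assms by auto
  moreover have "R \<noteq> v" using assms(5) vertex(2) by (auto simp: bd_cube_def)
  ultimately show False using assms(3)[of R] assms(4) by auto
qed

lemma top_pair_exists:
  assumes "L \<subseteq> K" "v \<in> L" "L \<noteq> {v}" "\<And>Q. Q \<in> L - {v} \<Longrightarrow> mate Q \<in> L"
  obtains s where "s \<in> L - {v}" "\<And>R. R \<in> L - {v} \<Longrightarrow> level R \<le> level s"
    "\<bar>bd_cube (mate s) s\<bar> = 1"
proof -
  have fin: "finite L" using assms(1) finite finite_subset by blast
  have "L - {v} \<noteq> {}" using assms(2,3) by auto
  define m where "m = Max (level ` (L - {v}))"
  have "m \<in> level ` (L - {v})"
    unfolding m_def using fin \<open>L - {v} \<noteq> {}\<close> by (intro Max_in) auto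
  then obtain Q where Q: "Q \<in> L - {v}" "level Q = m" by blast
  have top: "level R \<le> level Q" if "R \<in> L - {v}" for R
    unfolding Q(2) m_def using fin that by simp
  have mate_Q: "mate Q \<in> L - {v}" "mate (mate Q) = Q" "level (mate Q) = level Q"
    using mate[of Q] Q(1) assms(1,4) by auto
  show ?thesis
  proof (cases "\<bar>bd_cube (mate Q) Q\<bar> = 1")
    case True
    then show ?thesis using that[of Q] Q(1) top by blast
  next
    case False
    then have "\<bar>bd_cube Q (mate Q)\<bar> = 1" using mate[of Q] Q(1) assms(1) by blast
    then show ?thesis using that[of "mate Q"] mate_Q top by simp
  qed
qed

lemma remove_top_pair:
  assumes "L \<subseteq> K" "face_closed L" "\<And>Q. Q \<in> L - {v} \<Longrightarrow> mate Q \<in> L"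
    and s: "s \<in> L - {v}" "\<And>R. R \<in> L - {v} \<Longrightarrow> level R \<le> level s"
  shows "\<And>R. R \<in> L \<Longrightarrow> bd_cube R s \<noteq> 0 \<Longrightarrow> R = mate s"
    and "face_closed (L - {s, mate s})"
    and "\<And>Q. Q \<in> L - {s, mate s} - {v} \<Longrightarrow> mate Q \<in> L - {s, mate s}"
proof -
  have mate_s: "mate s \<in> K - {v}" "mate (mate s) = s" "level (mate s) = level s"
    using mate[of s] s(1) assms(1) by auto
  have t: "mate s \<in> L - {v}" "\<And>R. R \<in> L - {v} \<Longrightarrow> level R \<le> level (mate s)"
    using mate_s(1,3) s assms(3) by auto
  show coface_s: "R = mate s" if "R \<in> L" "bd_cube R s \<noteq> 0" for R
    using top_cell_cofaces[OF assms(1) s that] .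
  have coface_t: "R = s" if "R \<in> L" "bd_cube R (mate s) \<noteq> 0" for R
    using top_cell_cofaces[OF assms(1) t that] mate_s(2) by simp
  show "face_closed (L - {s, mate s})"
    unfolding face_closed_def
  proof (intro ballI allI impI)
    fix R P assume R: "R \<in> L - {s, mate s}" and "bd_cube R P \<noteq> 0"
    then have "P \<in> L" using assms(2) unfolding face_closed_def by blast
    moreover have "P \<noteq> s" "P \<noteq> mate s"
      using coface_s[of R] coface_t[of R] R \<open>bd_cube R P \<noteq> 0\<close> by auto
    ultimately show "P \<in> L - {s, mate s}" by blast
  qed
  show "mate Q \<in> L - {s, mate s}" if Q: "Q \<in> L - {s, mate s} - {v}" for Q
  proof -
    have "mate (mate Q) = Q" using mate[of Q] Q assms(1) by blast
    then have "mate Q \<noteq> s" "mate Q \<noteq> mate s" using Q mate_s(2) by auto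
    moreover have "mate Q \<in> L" using Q assms(3) by blast
    ultimately show ?thesis by blast
  qed
qed

(* Collapse a matched pair of maximal level: its lower cube is a free face. *)
lemma acyclic_in_subcomplex:
  assumes "L \<subseteq> K" "v \<in> L" "face_closed L" "\<And>Q. Q \<in> L - {v} \<Longrightarrow> mate Q \<in> L"
  shows "acyclic_in L"
  using assms
proof (induction "card L" arbitrary: L rule: less_induct)
  case less
  show ?case
  proof (cases "L = {v}")
    case True
    then show ?thesis using acyclic_in_vertex vertex(2) by simp
  next
    case False
    obtain s where s: "s \<in> L - {v}" "\<And>R. R \<in> L - {v} \<Longrightarrow> level R \<le> level s"
      "\<bar>bd_cube (mate s) s\<bar> = 1"
      using top_pair_exists[OF less.prems(1,2) False less.prems(4)] by blast
    note removal = remove_top_pair[OF less.prems(1,3,4) s(1,2)]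
    have mate_s: "mate s \<in> L" "mate s \<noteq> v" "finite {i. snd (mate s i)}"
      using less.prems(4)[OF s(1)] mate[of s] s(1) less.prems(1) finite_dims by auto
    have "acyclic_in (L - {s, mate s})"
    proof (rule less.hyps[OF _ _ _ removal(2,3)])
      show "card (L - {s, mate s}) < card L"
        using s(1) less.prems(1) finite finite_subset by (intro psubset_card_mono) auto
      show "L - {s, mate s} \<subseteq> K" using less.prems(1) by blast
      show "v \<in> L - {s, mate s}" using less.prems(2) s(1) mate_s(2) by blast
    qed
    then show ?thesis
      using acyclic_in_collapse[OF less.prems(3) mate_s(1,3) s(3)] removal(1) by blast
  qed
qed

theorem acyclic: "acyclic_in K"
proof (rule acyclic_in_subcomplex[OF order_refl vertex(1) closed])
  show "mate Q \<in> K" if "Q \<in> K - {v}" for Q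
    using mate[OF that] by blast
qed

end

section \<open>Intervals in simply rooted families\<close>

definition toggle :: "'a \<Rightarrow> 'a set \<Rightarrow> 'a set" where
  "toggle x A = (if x \<in> A then A - {x} else insert x A)"

lemma toggle_toggle [simp]: "toggle x (toggle x A) = A"
  by (auto simp: toggle_def)

lemma toggle_commute: "toggle x (toggle y A) = toggle y (toggle x A)"
  by (auto simp: toggle_def)

lemma insert_toggle [simp]: "insert x (toggle x A) = insert x A"
  by (auto simp: toggle_def)

lemma toggle_subset: "x \<in> B \<Longrightarrow> A \<subseteq> B \<Longrightarrow> toggle x A \<subseteq> B"
  by (auto simp: toggle_def)

lemma ival_antimono: "A \<subseteq> A' \<Longrightarrow> ival A' B \<subseteq> ival A B"
  by (auto simp: ival_def)

lemma ival_split: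
  assumes "i \<in> B" "i \<notin> A"
  shows "ival A B = ival A (B - {i}) \<union> ival (insert i A) B"
  using assms by (auto simp: ival_def)

definition root_of :: "nat set set \<Rightarrow> nat set \<Rightarrow> nat" where
  "root_of F B = (SOME i. i \<in> B \<and> ival {i} B \<subseteq> F)"

lemma root_of:
  assumes "simply_rooted F" "B \<in> F" "B \<noteq> {}"
  shows "root_of F B \<in> B" "ival {root_of F B} B \<subseteq> F"
proof -
  have "\<exists>i. i \<in> B \<and> ival {i} B \<subseteq> F" using assms unfolding simply_rooted_def by blast
  from someI_ex[OF this] show "root_of F B \<in> B" "ival {root_of F B} B \<subseteq> F"
    unfolding root_of_def by blast+
qed

lemma non_intervals_empty_or_Pow:
  assumes "simply_rooted F" "finite B"
  shows "{A. A \<subseteq> B \<and> \<not> ival A B \<subseteq> F} = {} \<or>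
    (\<exists>C\<subseteq>B. C \<notin> F \<and> {A. A \<subseteq> B \<and> \<not> ival A B \<subseteq> F} = Pow C)"
  using assms(2)
proof (induction B rule: finite_psubset_induct)
  case (psubset B)
  consider "B = {}" "B \<in> F" | "B \<notin> F" | "B \<in> F" "B \<noteq> {}" by blast
  then show ?case
  proof cases
    case 1
    then show ?thesis by (auto simp: ival_def)
  next
    case 2
    then have "{A. A \<subseteq> B \<and> \<not> ival A B \<subseteq> F} = Pow B" by (auto simp: ival_def)
    with 2 show ?thesis by blast
  next
    case 3
    define i where "i = root_of F B"
    have i: "i \<in> B" "ival {i} B \<subseteq> F" using root_of[OF assms(1) 3] unfolding i_def by auto
    have "A \<subseteq> B \<and> \<not> ival A B \<subseteq> F \<longleftrightarrow> A \<subseteq> B - {i} \<and> \<not> ival A (B - {i}) \<subseteq> F" for A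
    proof (cases "i \<in> A")
      case True
      then show ?thesis using i(2) ival_antimono[of "{i}" A B] by auto
    next
      case False
      then show ?thesis
        using i ival_split[OF i(1) False] ival_antimono[of "{i}" "insert i A" B] by auto
    qed
    then have eq: "{A. A \<subseteq> B \<and> \<not> ival A B \<subseteq> F} = {A. A \<subseteq> B - {i} \<and> \<not> ival A (B - {i}) \<subseteq> F}"
      by (rule Collect_cong)
    have "B - {i} \<subset> B" using i(1) by blast
    from psubset.IH[OF this] show ?thesis
    proof (rule disjE)
      assume "\<exists>C\<subseteq>B - {i}. C \<notin> F \<and> {A. A \<subseteq> B - {i} \<and> \<not> ival A (B - {i}) \<subseteq> F} = Pow C"
      then obtain C where "C \<subseteq> B - {i}" "C \<notin> F"
        "{A. A \<subseteq> B - {i} \<and> \<not> ival A (B - {i}) \<subseteq> F} = Pow C" by blast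
      then show ?thesis unfolding eq by (intro disjI2 exI[of _ C] conjI) auto
    qed (simp add: eq)
  qed
qed

definition fallback_pivot :: "nat set set \<Rightarrow> nat set \<Rightarrow> nat" where
  "fallback_pivot F B = (SOME x. x \<in> B \<and> (\<forall>A\<subseteq>B. \<not> ival A B \<subseteq> F \<longrightarrow> \<not> ival (toggle x A) B \<subseteq> F))"

lemma fallback_pivot:
  assumes "simply_rooted F" "{} \<in> F" "finite B" "A \<subseteq> B" "\<not> ival A B \<subseteq> F"
  shows "fallback_pivot F B \<in> B"
    and "\<And>A'. A' \<subseteq> B \<Longrightarrow> \<not> ival A' B \<subseteq> F \<Longrightarrow> \<not> ival (toggle (fallback_pivot F B) A') B \<subseteq> F"
proof -
  obtain C where C: "C \<subseteq> B" "C \<notin> F" "{A. A \<subseteq> B \<and> \<not> ival A B \<subseteq> F} = Pow C"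
    using non_intervals_empty_or_Pow[OF assms(1,3)] assms(4,5) by blast
  have non_interval: "A' \<subseteq> B \<and> \<not> ival A' B \<subseteq> F \<longleftrightarrow> A' \<subseteq> C" for A'
    using C(3)[THEN eqset_imp_iff, of A'] by simp
  obtain x where x: "x \<in> C" using C(2) assms(2) by (metis ex_in_conv)
  have "\<not> ival (toggle x A') B \<subseteq> F" if "A' \<subseteq> B" "\<not> ival A' B \<subseteq> F" for A'
    using that non_interval[of A'] non_interval[of "toggle x A'"] toggle_subset[OF x] by blast
  then have "x \<in> B \<and> (\<forall>A\<subseteq>B. \<not> ival A B \<subseteq> F \<longrightarrow> \<not> ival (toggle x A) B \<subseteq> F)"
    using x C(1) by blast
  then have "fallback_pivot F B \<in> B \<and>
      (\<forall>A\<subseteq>B. \<not> ival A B \<subseteq> F \<longrightarrow> \<not> ival (toggle (fallback_pivot F B) A) B \<subseteq> F)"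
    unfolding fallback_pivot_def by (rule someI)
  then show "fallback_pivot F B \<in> B"
    "\<And>A'. A' \<subseteq> B \<Longrightarrow> \<not> ival A' B \<subseteq> F \<Longrightarrow> \<not> ival (toggle (fallback_pivot F B) A') B \<subseteq> F"
    by auto
qed

definition root_regular :: "nat set set \<Rightarrow> nat set \<Rightarrow> nat set \<Rightarrow> bool" where
  "root_regular F A B \<longleftrightarrow> ival (toggle (root_of F B) A) B \<subseteq> F"

definition pivot :: "nat set set \<Rightarrow> nat set \<Rightarrow> nat set \<Rightarrow> nat" where
  "pivot F A B = (if root_regular F A B then root_of F B else fallback_pivot F B)"

(* The parity bit puts an irregular cube above its root-regular upper faces. *)
definition pivot_level :: "nat set set \<Rightarrow> nat set \<Rightarrow> nat set \<Rightarrow> nat" where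
  "pivot_level F A B =
     2 * card (B - insert (pivot F A B) A) + (if root_regular F A B then 0 else 1)"

context
  fixes F :: "nat set set" and B :: "nat set"
  assumes rooted: "simply_rooted F" and empty: "{} \<in> F" and B: "finite B" "B \<in> F" "B \<noteq> {}"
begin

lemma root_of_mem_if_irregular:
  assumes "\<not> root_regular F A B"
  shows "root_of F B \<in> A"
proof (rule ccontr)
  assume "root_of F B \<notin> A"
  then have "ival (toggle (root_of F B) A) B \<subseteq> ival {root_of F B} B"
    by (intro ival_antimono) (simp add: toggle_def)
  with root_of(2)[OF rooted B(2,3)] assms show False
    unfolding root_regular_def by blast
qed

lemma pivot_if_irregular:
  assumes "A \<subseteq> B" "ival A B \<subseteq> F" "\<not> root_regular F A B"
  shows "pivot F A B \<in> B" "pivot F A B \<noteq> root_of F B"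
    and "\<And>A'. A' \<subseteq> B \<Longrightarrow> \<not> ival A' B \<subseteq> F \<Longrightarrow> \<not> ival (toggle (pivot F A B) A') B \<subseteq> F"
proof -
  have toggle_root: "toggle (root_of F B) A \<subseteq> B" "\<not> ival (toggle (root_of F B) A) B \<subseteq> F"
    using assms root_of(1)[OF rooted B(2,3)] by (auto simp: root_regular_def toggle_subset)
  have pivot: "pivot F A B = fallback_pivot F B" using assms(3) by (simp add: pivot_def)
  show "pivot F A B \<in> B"
    and flip: "\<And>A'. A' \<subseteq> B \<Longrightarrow> \<not> ival A' B \<subseteq> F \<Longrightarrow> \<not> ival (toggle (pivot F A B) A') B \<subseteq> F"
    unfolding pivot using fallback_pivot[OF rooted empty B(1) toggle_root] by blast+
  show "pivot F A B \<noteq> root_of F B"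
    using flip[OF toggle_root] assms(2) by auto
qed

lemma pivot_mem:
  assumes "A \<subseteq> B" "ival A B \<subseteq> F"
  shows "pivot F A B \<in> B"
  using pivot_if_irregular[OF assms] root_of(1)[OF rooted B(2,3)] by (auto simp: pivot_def)

lemma ival_toggle_pivot:
  assumes "A \<subseteq> B" "ival A B \<subseteq> F"
  shows "ival (toggle (pivot F A B) A) B \<subseteq> F"
proof (cases "root_regular F A B")
  case True
  then show ?thesis by (simp add: pivot_def root_regular_def)
next
  case False
  then have "root_of F B \<in> toggle (pivot F A B) A"
    using root_of_mem_if_irregular pivot_if_irregular(2)[OF assms] by (auto simp: toggle_def)
  then have "ival (toggle (pivot F A B) A) B \<subseteq> ival {root_of F B} B"
    by (intro ival_antimono) simp
  with root_of(2)[OF rooted B(2,3)] show ?thesis by blast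
qed

lemma root_regular_toggle_pivot:
  assumes "A \<subseteq> B" "ival A B \<subseteq> F"
  shows "root_regular F (toggle (pivot F A B) A) B \<longleftrightarrow> root_regular F A B"
proof (cases "root_regular F A B")
  case True
  then show ?thesis using assms(2) by (simp add: pivot_def root_regular_def)
next
  case False
  have "toggle (root_of F B) A \<subseteq> B" "\<not> ival (toggle (root_of F B) A) B \<subseteq> F"
    using False assms(1) root_of(1)[OF rooted B(2,3)] by (auto simp: root_regular_def toggle_subset)
  from pivot_if_irregular(3)[OF assms False this] False show ?thesis
    by (simp add: root_regular_def toggle_commute)
qed

lemma pivot_toggle_pivot:
  assumes "A \<subseteq> B" "ival A B \<subseteq> F"
  shows "pivot F (toggle (pivot F A B) A) B = pivot F A B"
  using root_regular_toggle_pivot[OF assms] by (simp add: pivot_def)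

lemma pivot_level_toggle_pivot:
  assumes "A \<subseteq> B" "ival A B \<subseteq> F"
  shows "pivot_level F (toggle (pivot F A B) A) B = pivot_level F A B"
  using root_regular_toggle_pivot[OF assms] pivot_toggle_pivot[OF assms]
  by (simp add: pivot_level_def)

lemma pivot_level_upper_face:
  assumes "A \<subseteq> B" "ival A B \<subseteq> F" "j \<in> B - A" "pivot F (insert j A) B \<noteq> j"
  shows "pivot_level F (insert j A) B < pivot_level F A B"
proof -
  define i where "i = root_of F B"
  have less: "card (B - insert p (insert j A)) < card (B - insert p A)" if "p \<noteq> j" for p
    using assms(3) that B(1) by (intro psubset_card_mono) auto
  have jA: "insert j A \<subseteq> B" "ival (insert j A) B \<subseteq> F"
    using assms(1-3) ival_antimono[of A "insert j A" B] by auto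
  consider "root_regular F A B" "root_regular F (insert j A) B"
    | "\<not> root_regular F A B" "\<not> root_regular F (insert j A) B"
    | "\<not> root_regular F A B" "root_regular F (insert j A) B"
    | "root_regular F A B" "\<not> root_regular F (insert j A) B" by blast
  then show ?thesis
  proof cases
    case 1
    then show ?thesis using assms(4) less by (simp add: pivot_level_def pivot_def)
  next
    case 2
    then show ?thesis using assms(4) less by (simp add: pivot_level_def pivot_def)
  next
    case 3
    define x where "x = pivot F A B"
    have "card (B - insert i (insert j A)) \<le> card (B - insert j A)"
      using B(1) by (intro card_mono) auto
    also have "\<dots> < card (B - A)"
      using assms(3) B(1) by (intro psubset_card_mono) auto
    also have "\<dots> \<le> card (insert x (B - insert x A))"
      using B(1) by (intro card_mono) auto
    also have "\<dots> \<le> Suc (card (B - insert x A))"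
      using B(1) by (simp add: card_insert_if)
    finally show ?thesis using 3 unfolding pivot_level_def x_def i_def by (simp add: pivot_def)
  next
    case 4
    then have "i \<in> insert j A" using root_of_mem_if_irregular unfolding i_def by blast
    moreover have "\<not> ival (toggle i (insert j A)) B \<subseteq> F"
      using 4 unfolding root_regular_def i_def by blast
    moreover have "ival (toggle i A) B \<subseteq> F" using 4 unfolding root_regular_def i_def by blast
    ultimately show ?thesis
      using assms(2,3) ival_antimono[of "toggle i A" "toggle i (insert j A)" B]
      by (cases "i = j") (auto simp: toggle_def)
  qed
qed

end

section \<open>Interval cubes\<close>

definition icube :: "nat set \<Rightarrow> nat set \<Rightarrow> ecube" where
  "icube A B = (\<lambda>i. if i \<in> A then (1, False) else if i \<in> B then (0, True) else (0, False))"

definition icube_lo :: "ecube \<Rightarrow> nat set" where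
  "icube_lo Q = {i. Q i = (1, False)}"

definition icube_hi :: "ecube \<Rightarrow> nat set" where
  "icube_hi Q = {i. Q i \<noteq> (0, False)}"

lemma icube_lo_icube [simp]: "icube_lo (icube A B) = A"
  by (auto simp: icube_lo_def icube_def)

lemma icube_hi_icube [simp]: "A \<subseteq> B \<Longrightarrow> icube_hi (icube A B) = B"
  by (auto simp: icube_hi_def icube_def)

lemma snd_icube: "snd (icube A B i) \<longleftrightarrow> i \<in> B - A"
  by (simp add: icube_def)

lemma face_hi_icube: "j \<in> B - A \<Longrightarrow> face_hi (icube A B) j = icube (insert j A) B"
  by (auto simp: face_hi_def icube_def)

lemma face_lo_icube: "j \<in> B - A \<Longrightarrow> face_lo (icube A B) j = icube A (B - {j})"
  by (auto simp: face_lo_def icube_def)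

lemma abs_bd_cube_icube_insert:
  assumes "finite B" "j \<in> B - A"
  shows "\<bar>bd_cube (icube A B) (icube (insert j A) B)\<bar> = 1"
  using abs_bd_cube_face_hi[of "icube A B" j] assms
  by (simp add: snd_icube face_hi_icube)

lemma cube_set_icube:
  assumes "A \<subseteq> B"
  shows "cube_set (icube A B) = geom_real A B"
proof -
  have "(real_of_int (fst (icube A B i)) \<le> x i \<and>
        x i \<le> real_of_int (fst (icube A B i)) + (if snd (icube A B i) then 1 else 0)) \<longleftrightarrow>
      (i \<in> A \<longrightarrow> x i = 1) \<and> (i \<in> B - A \<longrightarrow> 0 \<le> x i \<and> x i \<le> 1) \<and> (i \<notin> B \<longrightarrow> x i = 0)"
    for x :: "nat \<Rightarrow> real" and i
    using assms by (auto simp: icube_def)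
  then show ?thesis unfolding cube_set_def geom_real_def by presburger
qed

lemma icube_if_unit_bounded:
  assumes "\<And>x i. x \<in> cube_set Q \<Longrightarrow> 0 \<le> x i \<and> x i \<le> 1"
  shows "Q = icube (icube_lo Q) (icube_hi Q)"
proof
  fix i
  define lo where "lo i = real_of_int (fst (Q i))" for i
  define hi where "hi i = real_of_int (fst (Q i)) + (if snd (Q i) then 1 else 0)" for i
  have "lo \<in> cube_set Q" "hi \<in> cube_set Q" by (auto simp: cube_set_def lo_def hi_def)
  then have "0 \<le> fst (Q i)" "fst (Q i) + (if snd (Q i) then 1 else 0) \<le> 1"
    using assms[of lo i] assms[of hi i] unfolding lo_def hi_def by (cases "snd (Q i)"; simp)+
  then have "Q i = (1, False) \<or> Q i = (0, True) \<or> Q i = (0, False)"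
    by (cases "Q i"; cases "snd (Q i)") auto
  then show "Q i = icube (icube_lo Q) (icube_hi Q) i"
    by (auto simp: icube_def icube_lo_def icube_hi_def)
qed

definition cubes_in :: "nat \<Rightarrow> (nat \<Rightarrow> real) set \<Rightarrow> ecube set" where
  "cubes_in n X = {Q. elem_cube n Q \<and> cube_set Q \<subseteq> X}"

lemma chains_eq_chains_in: "chains n X k = chains_in (cubes_in n X) k"
  by (auto simp: chains_def chains_in_def cubes_in_def chain_supp_def)

lemma finite_nondegenerate_cubes_in: "Q \<in> cubes_in n X \<Longrightarrow> finite {i. snd (Q i)}"
  by (rule finite_subset[of _ "{1..n}"]) (auto simp: cubes_in_def elem_cube_def)

lemma cube_set_faces_subset:
  assumes "snd (Q j)"
  shows "cube_set (face_hi Q j) \<subseteq> cube_set Q" "cube_set (face_lo Q j) \<subseteq> cube_set Q"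
proof -
  have "cube_set (Q(j := (a, False))) \<subseteq> cube_set Q" if "a = fst (Q j) \<or> a = fst (Q j) + 1" for a
  proof (intro subsetI, unfold cube_set_def mem_Collect_eq, intro allI)
    fix x i assume x: "\<forall>i. real_of_int (fst ((Q(j := (a, False))) i)) \<le> x i \<and>
      x i \<le> real_of_int (fst ((Q(j := (a, False))) i)) + (if snd ((Q(j := (a, False))) i) then 1 else 0)"
    then show "real_of_int (fst (Q i)) \<le> x i \<and> x i \<le> real_of_int (fst (Q i)) + (if snd (Q i) then 1 else 0)"
      using assms that spec[OF x, of i] by (cases "i = j") auto
  qed
  then show "cube_set (face_hi Q j) \<subseteq> cube_set Q" "cube_set (face_lo Q j) \<subseteq> cube_set Q"
    by (simp_all add: face_hi_def face_lo_def)
qed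

lemma face_closed_cubes_in: "face_closed (cubes_in n X)"
  unfolding face_closed_def
proof (intro ballI allI impI)
  fix Q P assume Q: "Q \<in> cubes_in n X" and "bd_cube Q P \<noteq> 0"
  then obtain j where j: "snd (Q j)" "P = face_hi Q j \<or> P = face_lo Q j"
    using bd_cube_nonzero_imp_face by blast
  then have "j \<in> {1..n}" using Q by (force simp: cubes_in_def elem_cube_def)
  then show "P \<in> cubes_in n X"
    using Q j cube_set_faces_subset[of Q j]
    by (auto simp: cubes_in_def elem_cube_def face_hi_def face_lo_def)
qed

lemma geom_real_subset_XF: "(A, B) \<in> cubes_of F \<Longrightarrow> geom_real A B \<subseteq> XF F"
  by (auto simp: XF_def)

lemma indicator_mem_geom_real:
  "A \<subseteq> C \<Longrightarrow> C \<subseteq> B \<Longrightarrow> (indicator C :: nat \<Rightarrow> real) \<in> geom_real A B"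
  by (auto simp: geom_real_def indicator_def)

lemma indicator_mem_XF: "(indicator C :: nat \<Rightarrow> real) \<in> XF F \<Longrightarrow> C \<in> F"
proof -
  assume "indicator C \<in> XF F"
  then obtain A B where "(A, B) \<in> cubes_of F" "indicator C \<in> geom_real A B"
    unfolding XF_def by blast
  then have "C \<in> ival A B" "ival A B \<subseteq> F"
    by (auto simp: cubes_of_def ival_def geom_real_def indicator_def split: if_splits)
  then show "C \<in> F" by blast
qed

lemma XF_unit_bounded:
  assumes "x \<in> XF F"
  shows "0 \<le> x i \<and> x i \<le> 1"
proof -
  obtain A B where "x \<in> geom_real A B" using assms unfolding XF_def by blast
  then have "(i \<in> A \<longrightarrow> x i = 1) \<and> (i \<in> B - A \<longrightarrow> 0 \<le> x i \<and> x i \<le> 1) \<and> (i \<notin> B \<longrightarrow> x i = 0)"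
    unfolding geom_real_def by blast
  then show ?thesis by (cases "i \<in> A"; cases "i \<in> B") auto
qed

lemma cubes_in_XF:
  assumes "F \<subseteq> Pow {1..n}"
  shows "cubes_in n (XF F) = (\<lambda>(A, B). icube A B) ` cubes_of F"
proof (intro set_eqI iffI)
  fix Q assume "Q \<in> cubes_in n (XF F)"
  then have sub: "cube_set Q \<subseteq> XF F" by (simp add: cubes_in_def)
  define A B where "A = icube_lo Q" and "B = icube_hi Q"
  have Q_eq: "Q = icube A B"
    unfolding A_def B_def using sub XF_unit_bounded by (intro icube_if_unit_bounded) blast
  have AB: "A \<subseteq> B" by (auto simp: A_def B_def icube_lo_def icube_hi_def)
  have "C \<in> F" if "C \<in> ival A B" for C
  proof (rule indicator_mem_XF)
    have "indicator C \<in> geom_real A B"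
      using that by (intro indicator_mem_geom_real) (auto simp: ival_def)
    then show "indicator C \<in> XF F"
      using sub unfolding Q_eq cube_set_icube[OF AB] by blast
  qed
  then have "(A, B) \<in> cubes_of F" using AB by (auto simp: cubes_of_def)
  then show "Q \<in> (\<lambda>(A, B). icube A B) ` cubes_of F"
    unfolding Q_eq by (rule rev_image_eqI) simp
next
  fix Q assume "Q \<in> (\<lambda>(A, B). icube A B) ` cubes_of F"
  then obtain A B where Q: "Q = icube A B" and AB: "(A, B) \<in> cubes_of F" by auto
  then have "A \<subseteq> B" "B \<in> F" by (auto simp: cubes_of_def ival_def)
  moreover have "B \<subseteq> {1..n}" using \<open>B \<in> F\<close> assms by blast
  ultimately have "elem_cube n Q"
    unfolding Q elem_cube_def icube_def by auto
  moreover have "cube_set Q \<subseteq> XF F"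
    unfolding Q cube_set_icube[OF \<open>A \<subseteq> B\<close>] using AB by (rule geom_real_subset_XF)
  ultimately show "Q \<in> cubes_in n (XF F)" by (simp add: cubes_in_def)
qed

section \<open>An acyclic matching on the cubes of X(F)\<close>

definition cube_mate :: "nat set set \<Rightarrow> ecube \<Rightarrow> ecube" where
  "cube_mate F Q = icube (toggle (pivot F (icube_lo Q) (icube_hi Q)) (icube_lo Q)) (icube_hi Q)"

(* Lexicographic in (card B, pivot_level F A B), since pivot_level F A B < 2 * n + 2. *)
definition cube_level :: "nat \<Rightarrow> nat set set \<Rightarrow> ecube \<Rightarrow> nat" where
  "cube_level n F Q = card (icube_hi Q) * (2 * n + 2) + pivot_level F (icube_lo Q) (icube_hi Q)"

context
  fixes F :: "nat set set" and n :: nat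
  assumes rooted: "simply_rooted F" and empty: "{} \<in> F" and F: "F \<subseteq> Pow {1..n}"
begin

lemma cubes_ofD:
  assumes "(A, B) \<in> cubes_of F"
  shows "A \<subseteq> B" "ival A B \<subseteq> F" "B \<in> F" "finite B" "card B \<le> n"
proof -
  show "A \<subseteq> B" "ival A B \<subseteq> F" using assms by (auto simp: cubes_of_def)
  then show "B \<in> F" by (auto simp: ival_def)
  then have "B \<subseteq> {1..n}" using F by blast
  then show "finite B" by (rule finite_subset) simp
  from \<open>B \<subseteq> {1..n}\<close> have "card B \<le> card {1..n}" by (intro card_mono) auto
  then show "card B \<le> n" by simp
qed

lemma cube_mate_icube:
  assumes "(A, B) \<in> cubes_of F" "B \<noteq> {}"
  defines "p \<equiv> pivot F A B"
  shows "cube_mate F (icube A B) = icube (toggle p A) B"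
    and "(toggle p A, B) \<in> cubes_of F"
    and "cube_mate F (icube (toggle p A) B) = icube A B"
    and "cube_level n F (icube (toggle p A) B) = cube_level n F (icube A B)"
    and "\<bar>bd_cube (icube (toggle p A) B) (icube A B)\<bar> = 1 \<or> \<bar>bd_cube (icube A B) (icube (toggle p A) B)\<bar> = 1"
proof -
  note cell = cubes_ofD[OF assms(1)]
  note B = cell(4,3) assms(2)
  have p: "p \<in> B" unfolding p_def by (rule pivot_mem[OF rooted empty B cell(1,2)])
  have sub: "toggle p A \<subseteq> B" using p cell(1) by (rule toggle_subset)
  show "cube_mate F (icube A B) = icube (toggle p A) B"
    using cell(1) by (simp add: cube_mate_def p_def)
  show "(toggle p A, B) \<in> cubes_of F"
    using sub ival_toggle_pivot[OF rooted empty B cell(1,2)] by (simp add: cubes_of_def p_def)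
  show "cube_mate F (icube (toggle p A) B) = icube A B"
    using sub pivot_toggle_pivot[OF rooted empty B cell(1,2)] by (simp add: cube_mate_def p_def)
  show "cube_level n F (icube (toggle p A) B) = cube_level n F (icube A B)"
    using sub cell(1) pivot_level_toggle_pivot[OF rooted empty B cell(1,2)]
    by (simp add: cube_level_def p_def)
  show "\<bar>bd_cube (icube (toggle p A) B) (icube A B)\<bar> = 1 \<or> \<bar>bd_cube (icube A B) (icube (toggle p A) B)\<bar> = 1"
  proof (cases "p \<in> A")
    case True
    have "\<bar>bd_cube (icube (A - {p}) B) (icube (insert p (A - {p})) B)\<bar> = 1"
      by (rule abs_bd_cube_icube_insert) (use B p in auto)
    then show ?thesis using True by (simp add: toggle_def insert_absorb)
  next
    case False
    have "\<bar>bd_cube (icube A B) (icube (insert p A) B)\<bar> = 1"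
      by (rule abs_bd_cube_icube_insert) (use B p False in auto)
    then show ?thesis using False by (simp add: toggle_def)
  qed
qed

lemma cube_level_faces:
  assumes R: "(A, B) \<in> cubes_of F" and j: "j \<in> B - A"
  shows "cube_level n F (icube A (B - {j})) < cube_level n F (icube A B)"
    and "cube_mate F (icube (insert j A) B) \<noteq> icube A B \<Longrightarrow>
      cube_level n F (icube (insert j A) B) < cube_level n F (icube A B)"
proof -
  note cell = cubes_ofD[OF R]
  have B: "finite B" "B \<in> F" "B \<noteq> {}" using cell j by auto
  let ?N = "2 * n + 2"
  have "pivot_level F A (B - {j}) < ?N"
  proof -
    have "card (B - {j} - insert (pivot F A (B - {j})) A) \<le> card (B - {j})"
      by (rule card_mono) (use B(1) in auto)
    then have "pivot_level F A (B - {j}) \<le> 2 * card (B - {j}) + 1"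
      unfolding pivot_level_def by simp
    also have "\<dots> < ?N" using cell(5) j B(1) by (simp add: card_Diff1_less_iff)
    finally show ?thesis .
  qed
  then have "card (B - {j}) * ?N + pivot_level F A (B - {j}) < Suc (card (B - {j})) * ?N"
    by simp
  also have "Suc (card (B - {j})) = card B"
    using B(1) j by (intro card_Suc_Diff1) auto
  finally have "card (B - {j}) * ?N + pivot_level F A (B - {j}) < card B * ?N" .
  then show "cube_level n F (icube A (B - {j})) < cube_level n F (icube A B)"
    using cell(1) j by (simp add: cube_level_def subset_Diff_insert)
  assume "cube_mate F (icube (insert j A) B) \<noteq> icube A B"
  moreover have "insert j A \<subseteq> B" using cell(1) j by blast
  ultimately have "pivot F (insert j A) B \<noteq> j"
    using j by (auto simp: cube_mate_def toggle_def)
  with pivot_level_upper_face[OF rooted empty B cell(1,2) j]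
  show "cube_level n F (icube (insert j A) B) < cube_level n F (icube A B)"
    using cell(1) j \<open>insert j A \<subseteq> B\<close> by (simp add: cube_level_def)
qed

lemma finite_cubes_of: "finite (cubes_of F)"
proof (rule finite_subset)
  have "(A, B) \<in> Pow {1..n} \<times> Pow {1..n}" if "(A, B) \<in> cubes_of F" for A B
    using cubes_ofD(1,3)[OF that] F by blast
  then show "cubes_of F \<subseteq> Pow {1..n} \<times> Pow {1..n}" by auto
qed simp

lemma cubes_in_XF_minus_origin:
  "Q \<in> cubes_in n (XF F) - {icube {} {}} \<longleftrightarrow>
    (\<exists>A B. Q = icube A B \<and> (A, B) \<in> cubes_of F \<and> B \<noteq> {})"
proof -
  have origin: "icube A B = icube {} {} \<longleftrightarrow> B = {}" if "(A, B) \<in> cubes_of F" for A B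
  proof
    assume "icube A B = icube {} {}"
    then have "icube_hi (icube A B) = icube_hi (icube {} {})" by simp
    then show "B = {}" using cubes_ofD(1)[OF that] by simp
  qed (use cubes_ofD(1)[OF that] in simp)
  show ?thesis
  proof
    assume "Q \<in> cubes_in n (XF F) - {icube {} {}}"
    then obtain A B where "Q = icube A B" "(A, B) \<in> cubes_of F" "Q \<noteq> icube {} {}"
      unfolding cubes_in_XF[OF F] by auto
    with origin show "\<exists>A B. Q = icube A B \<and> (A, B) \<in> cubes_of F \<and> B \<noteq> {}" by blast
  next
    assume "\<exists>A B. Q = icube A B \<and> (A, B) \<in> cubes_of F \<and> B \<noteq> {}"
    with origin show "Q \<in> cubes_in n (XF F) - {icube {} {}}"
      unfolding cubes_in_XF[OF F] by force
  qed
qed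

lemma acyclic_matching_cubes_in_XF:
  "acyclic_matching (cubes_in n (XF F)) (icube {} {}) (cube_mate F) (cube_level n F)"
proof (rule acyclic_matching.intro)
  let ?K = "cubes_in n (XF F)" and ?v = "icube {} {}"
  show "finite ?K" using finite_cubes_of by (simp add: cubes_in_XF[OF F])
  show "face_closed ?K" by (rule face_closed_cubes_in)
  show "\<And>Q. Q \<in> ?K \<Longrightarrow> finite {i. snd (Q i)}" by (rule finite_nondegenerate_cubes_in)
  show "?v \<in> ?K" unfolding cubes_in_XF[OF F] using empty by (force simp: cubes_of_def ival_def)
  show "\<And>i. \<not> snd (?v i)" by (simp add: snd_icube)
next
  fix Q assume "Q \<in> cubes_in n (XF F) - {icube {} {}}"
  then obtain A B where Q: "Q = icube A B" "(A, B) \<in> cubes_of F" "B \<noteq> {}"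
    using cubes_in_XF_minus_origin by blast
  then show "cube_mate F Q \<in> cubes_in n (XF F) - {icube {} {}} \<and> cube_mate F (cube_mate F Q) = Q \<and>
      cube_level n F (cube_mate F Q) = cube_level n F Q \<and>
      (\<bar>bd_cube (cube_mate F Q) Q\<bar> = 1 \<or> \<bar>bd_cube Q (cube_mate F Q)\<bar> = 1)"
  proof (intro conjI)
    show "cube_mate F Q \<in> cubes_in n (XF F) - {icube {} {}}"
      unfolding cubes_in_XF_minus_origin using cube_mate_icube(1,2)[OF Q(2,3)] Q(1,3) by blast
  qed (use cube_mate_icube[OF Q(2,3)] Q(1) in simp_all)
next
  fix Q R assume "R \<in> cubes_in n (XF F)" "bd_cube R Q \<noteq> 0" "R \<noteq> cube_mate F Q"
  obtain A B where R: "R = icube A B" "(A, B) \<in> cubes_of F"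
    using \<open>R \<in> cubes_in n (XF F)\<close> cubes_in_XF[OF F] by auto
  obtain j where "snd (R j)" "Q = face_hi R j \<or> Q = face_lo R j"
    using \<open>bd_cube R Q \<noteq> 0\<close> bd_cube_nonzero_imp_face by blast
  moreover have j: "j \<in> B - A" using \<open>snd (R j)\<close> R(1) by (simp add: snd_icube)
  ultimately have "Q = icube (insert j A) B \<or> Q = icube A (B - {j})"
    using R(1) face_hi_icube[OF j] face_lo_icube[OF j] by simp
  then show "cube_level n F Q < cube_level n F R"
    using cube_level_faces[OF R(2) j] \<open>R \<noteq> cube_mate F Q\<close> unfolding R(1) by auto
qed

end

section \<open>Connectedness\<close>

lemma connected_geom_real:
  assumes "A \<subseteq> B"
  shows "connected (geom_real A B)"
proof -
  define S :: "nat \<Rightarrow> real set" where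
    "S i = (if i \<in> A then {1} else if i \<in> B then {0..1} else {0})" for i
  have "(i \<in> A \<longrightarrow> x i = 1) \<and> (i \<in> B - A \<longrightarrow> 0 \<le> x i \<and> x i \<le> 1) \<and> (i \<notin> B \<longrightarrow> x i = 0)
      \<longleftrightarrow> x i \<in> S i" for x :: "nat \<Rightarrow> real" and i
    using assms by (auto simp: S_def)
  then have "geom_real A B = PiE UNIV S"
    unfolding geom_real_def PiE_UNIV_domain Pi_iff by blast
  moreover have "connectedin (product_topology (\<lambda>i. euclidean) UNIV) (PiE UNIV S)"
    by (simp add: connectedin_PiE S_def)
  ultimately show ?thesis by (simp add: euclidean_product_topology)
qed

lemma connected_component_XF_cube:
  assumes "(A, B) \<in> cubes_of F" "x \<in> geom_real A B" "y \<in> geom_real A B"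
  shows "connected_component (XF F) x y"
  using connected_geom_real geom_real_subset_XF[OF assms(1)] assms
  by (intro connected_componentI) (auto simp: cubes_of_def)

lemma connected_XF:
  assumes "simply_rooted F" "{} \<in> F"
  shows "connected (XF F)"
proof -
  let ?vertex = "\<lambda>C. indicator C :: nat \<Rightarrow> real"
  have origin: "({}, {}) \<in> cubes_of F" using assms(2) by (simp add: cubes_of_def ival_def)
  have vertex: "?vertex A \<in> geom_real A B" if "A \<subseteq> B" for A B
    using that indicator_mem_geom_real[of A A B] by simp
  have "connected_component (XF F) (?vertex {}) (?vertex A)" if "A \<in> F" for A
  proof (cases "A = {}")
    case True
    then show ?thesis
      using connected_component_XF_cube[OF origin vertex[of "{}" "{}"] vertex[of "{}" "{}"]] by simp
  next
    case False
    define r where "r = root_of F A"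
    have "r \<in> A" "ival {r} A \<subseteq> F" using root_of[OF assms(1) that False] by (auto simp: r_def)
    then have edge: "({}, {r}) \<in> cubes_of F" and face: "({r}, A) \<in> cubes_of F"
      using assms(2) by (auto simp: cubes_of_def ival_def subset_singleton_iff)
    have "connected_component (XF F) (?vertex {}) (?vertex {r})"
      by (auto intro!: connected_component_XF_cube[OF edge] indicator_mem_geom_real)
    moreover have "connected_component (XF F) (?vertex {r}) (?vertex A)"
      using \<open>r \<in> A\<close> by (auto intro!: connected_component_XF_cube[OF face] indicator_mem_geom_real)
    ultimately show ?thesis by (rule connected_component_trans)
  qed
  moreover have "\<exists>A. A \<in> F \<and> connected_component (XF F) (?vertex A) x" if x: "x \<in> XF F" for x
  proof -
    obtain A B where AB: "(A, B) \<in> cubes_of F" "x \<in> geom_real A B"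
      using x unfolding XF_def by blast
    then have "A \<in> F" "A \<subseteq> B" by (auto simp: cubes_of_def ival_def)
    then show ?thesis using connected_component_XF_cube[OF AB(1) vertex AB(2)] by blast
  qed
  ultimately have "connected_component (XF F) (?vertex {}) x" if "x \<in> XF F" for x
    using that connected_component_trans by metis
  then show ?thesis
    unfolding connected_iff_connected_component
    by (metis connected_component_sym connected_component_trans)
qed

theorem theorem1:
  fixes n :: nat and F :: "nat set set"
  assumes "n \<ge> 1"
    and "F \<subseteq> Pow {1..n}"
    and "simply_rooted F"
    and "{} \<in> F"
  shows "acyclic_cubical n (XF F)"
proof -
  have "({}, {}) \<in> cubes_of F" using assms(4) by (simp add: cubes_of_def ival_def)
  then have "XF F \<noteq> {}"
    using geom_real_subset_XF indicator_mem_geom_real[of "{}" "{}" "{}"] by blast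
  moreover have "\<forall>k\<ge>1. homology_trivial n (XF F) k"
    using acyclic_matching.acyclic[OF acyclic_matching_cubes_in_XF[OF assms(3,4,2)]]
    unfolding homology_trivial_def chains_eq_chains_in acyclic_in_def by blast
  ultimately show ?thesis
    unfolding acyclic_cubical_def using connected_XF[OF assms(3,4)] by blast
qed

end
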